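(* With $\Psi$, $X,Y$, $A,B,C,D$ and $\alpha,\beta,\gamma,\delta$ as follows, for every real $t$ with $|t|<\|\Psi\|^{-1}$ (where $\|\Psi\|=\sup_{|Z|=1}|\Psi Z|$ is the operator norm) one has $$\kappa(t)=\alpha+\beta t+\gamma t^2+\delta t^3-\tfrac34\sum_{n=4}^\infty t^n\langle\Psi^{n-4}D,D\rangle,$$ and this is the Taylor series of $\kappa$ at $0$. Here $A=[\Psi X,Y]+[X,\Psi Y]$, $B=[\Psi X,\Psi Y]$, $C=[\Psi X,Y]+[\Psi Y,X]$, $D=\Psi^2[X,Y]-\Psi A+B$, $\alpha=\tfrac14|[X,Y]|^2$, $\beta=-\tfrac34\langle\Psi[X,Y],[X,Y]\rangle$, $\gamma=-\tfrac34|\Psi[X,Y]|^2+\tfrac32\langle\Psi[X,Y],A\rangle-\tfrac12\langle[X,Y],B\rangle-\tfrac14|A|^2+\tfrac14|C|^2-\langle[\Psi X,X],[\Psi Y,Y]\rangle$, $\delta=-\tfrac34\langle\Psi^3[X,Y],[X,Y]\rangle+\tfrac32\langle\Psi^2[X,Y],A\rangle-\tfrac32\langle\Psi[X,Y],B\rangle-\tfrac34\langle\Psi A,A\rangle-\tfrac14\langle\Psi C,C\rangle+\langle\Psi[\Psi X,X],[\Psi Y,Y]\rangle+\langle A,B\rangle$.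
   Context: $G$ is a compact Lie group with Lie algebra $\mathfrak g$ and bi-invariant metric $h_0$; $\langle Z_1,Z_2\rangle=h_0(Z_1,Z_2)$, $|Z|^2=\langle Z,Z\rangle$. A left-invariant metric $h$ corresponds to the $h_0$-self-adjoint positive definite $\Phi$ with $h(X,Y)=\langle\Phi X,Y\rangle$ on $\mathfrak g$. An inverse-linear path is $\Phi_t=(I-t\Psi)^{-1}$ with $\Psi$ $h_0$-self-adjoint; $h_t$ is the left-invariant metric with matrix $\Phi_t$. The unnormalized sectional curvature is $k_h(Z_1,Z_2)=h(R_h(Z_1,Z_2)Z_2,Z_1)$, and for fixed $X,Y\in\mathfrak g$, $\kappa(t)=k_{h_t}(\Phi_t^{-1}X,\Phi_t^{-1}Y)$. *)

theory Defs
  imports "HOL-Analysis.Analysis"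
begin

text \<open>Left-invariant geometry on a Lie group, expressed on its Lie algebra.
  The Lie algebra is a finite-dimensional real inner product space (type class
  euclidean_space, inner product = bi-invariant metric h0) with bracket br.
  A left-invariant metric is given by h(U,V) = inner (Phi U) V.\<close>

definition metric_of :: "('a::real_inner \<Rightarrow> 'a) \<Rightarrow> 'a \<Rightarrow> 'a \<Rightarrow> real" where
  "metric_of Phi = (\<lambda>U V. inner (Phi U) V)"

text \<open>Levi-Civita connection on left-invariant vector fields: the unique
  torsion-free connection compatible with h (h(Y,Z) is constant for
  left-invariant fields, so X h(Y,Z) = 0).\<close>
definition LC :: "('a \<Rightarrow> 'a \<Rightarrow> 'a::real_vector) \<Rightarrow> ('a \<Rightarrow> 'a \<Rightarrow> real) \<Rightarrow> 'a \<Rightarrow> 'a \<Rightarrow> 'a" where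
  "LC br h = (THE nb. (\<forall>X Y. nb X Y - nb Y X = br X Y) \<and>
                      (\<forall>X Y Z. h (nb X Y) Z + h Y (nb X Z) = 0))"

definition curvR :: "('a \<Rightarrow> 'a \<Rightarrow> 'a::real_vector) \<Rightarrow> ('a \<Rightarrow> 'a \<Rightarrow> real) \<Rightarrow> 'a \<Rightarrow> 'a \<Rightarrow> 'a \<Rightarrow> 'a" where
  "curvR br h X Y Z = LC br h X (LC br h Y Z) - LC br h Y (LC br h X Z) - LC br h (br X Y) Z"

definition seck :: "('a \<Rightarrow> 'a \<Rightarrow> 'a::real_vector) \<Rightarrow> ('a \<Rightarrow> 'a \<Rightarrow> real) \<Rightarrow> 'a \<Rightarrow> 'a \<Rightarrow> real" where
  "seck br h Z1 Z2 = h (curvR br h Z1 Z2 Z2) Z1"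

definition vA :: "('a \<Rightarrow> 'a \<Rightarrow> 'a) \<Rightarrow> ('a \<Rightarrow> 'a) \<Rightarrow> 'a \<Rightarrow> 'a \<Rightarrow> 'a::real_vector" where
  "vA br Psi X Y = br (Psi X) Y + br X (Psi Y)"
definition vB :: "('a \<Rightarrow> 'a \<Rightarrow> 'a) \<Rightarrow> ('a \<Rightarrow> 'a) \<Rightarrow> 'a \<Rightarrow> 'a \<Rightarrow> 'a::real_vector" where
  "vB br Psi X Y = br (Psi X) (Psi Y)"
definition vC :: "('a \<Rightarrow> 'a \<Rightarrow> 'a) \<Rightarrow> ('a \<Rightarrow> 'a) \<Rightarrow> 'a \<Rightarrow> 'a \<Rightarrow> 'a::real_vector" where
  "vC br Psi X Y = br (Psi X) Y + br (Psi Y) X"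
definition vD :: "('a \<Rightarrow> 'a \<Rightarrow> 'a) \<Rightarrow> ('a \<Rightarrow> 'a) \<Rightarrow> 'a \<Rightarrow> 'a \<Rightarrow> 'a::real_vector" where
  "vD br Psi X Y = Psi (Psi (br X Y)) - Psi (vA br Psi X Y) + vB br Psi X Y"

end

theory Submission
  imports Defs
begin

text \<open>The Koszul formula and ad-invariance of the bi-invariant metric give the Levi-Civita
  connection of h(U,V) = <Phi U, V> in closed form:
  nabla_U V = 1/2 ([U,V] + Phi^-1 ([U, Phi V] + [V, Phi U])).
  Along the path Phi_t^-1 = I - t Psi is affine in t, so with x = Phi_t^-1 X and y = Phi_t^-1 Y
  every term of kappa(t) is a polynomial in t except h_t([x,y],[x,y]). Writing
  [x,y] = Phi_t^-1 q + t^2 D with q polynomial in t isolates the only non-polynomial part,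
  t^4 <Phi_t D, D>, and the Neumann series Phi_t = sum t^n Psi^n makes kappa a power series
  converging for |t| |Psi| < 1, whose coefficients are therefore its Taylor coefficients.\<close>

section \<open>The Levi-Civita connection of a left-invariant metric\<close>

lemma koszul_formula:
  fixes nb br :: "'a::real_vector \<Rightarrow> 'a \<Rightarrow> 'a" and h :: "'a \<Rightarrow> 'a \<Rightarrow> real"
  assumes torsion_free: "\<And>X Y. nb X Y - nb Y X = br X Y"
    and metric: "\<And>X Y Z. h (nb X Y) Z + h Y (nb X Z) = 0"
    and sym: "\<And>U V. h U V = h V U"
    and diff_left: "\<And>U V Z. h (U - V) Z = h U Z - h V Z"
  shows "2 * h (nb X Y) Z = h (br X Y) Z - h (br Y Z) X + h (br Z X) Y"
proof -
  have skew: "h (nb U V) W = - h (nb U W) V" for U V W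
    using metric sym by (metis add_eq_0_iff)
  have torsion: "h (nb U V) W - h (nb V U) W = h (br U V) W" for U V W
    using torsion_free diff_left by metis
  show ?thesis
    using skew[of X Y Z] skew[of Y X Z] skew[of Z Y X] skew[of X Z Y]
      torsion[of X Y Z] torsion[of Y Z X] torsion[of Z X Y]
    by linarith
qed

locale ad_invariant_bracket =
  fixes br :: "'a::real_inner \<Rightarrow> 'a \<Rightarrow> 'a"
  assumes bilinear_br: "bilinear br"
    and antisym: "\<And>U V. br U V = - br V U"
    and ad_invariant: "\<And>U V W. inner (br U V) W = inner U (br V W)"
begin

lemmas bracket_simps = bilinear_ladd[OF bilinear_br] bilinear_radd[OF bilinear_br]
  bilinear_lmul[OF bilinear_br] bilinear_rmul[OF bilinear_br]
  bilinear_lneg[OF bilinear_br] bilinear_rneg[OF bilinear_br]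
  bilinear_lsub[OF bilinear_br] bilinear_rsub[OF bilinear_br]

lemma bracket_self [simp]: "br U U = 0"
proof -
  have "2 *\<^sub>R br U U = 0" using antisym[of U U] by (simp add: scaleR_2 eq_neg_iff_add_eq_0)
  then show ?thesis by simp
qed

lemma inner_bracket_swap: "inner (br U V) W = - inner V (br U W)"
  by (metis ad_invariant antisym inner_minus_left)

end

locale left_invariant_metric = ad_invariant_bracket br
  for br :: "'a::real_inner \<Rightarrow> 'a \<Rightarrow> 'a" +
  fixes Phi Phi_inv :: "'a \<Rightarrow> 'a"
  assumes linear_Phi_inv: "linear Phi_inv"
    and Phi_inv_self_adjoint: "\<And>U V. inner (Phi_inv U) V = inner U (Phi_inv V)"
    and Phi_Phi_inv [simp]: "\<And>Z. Phi (Phi_inv Z) = Z"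
    and Phi_inv_Phi [simp]: "\<And>Z. Phi_inv (Phi Z) = Z"
begin

lemma linear_Phi: "linear Phi"
proof (rule linearI)
  show "Phi (a + b) = Phi a + Phi b" for a b
    by (metis Phi_Phi_inv Phi_inv_Phi linear_add[OF linear_Phi_inv])
  show "Phi (c *\<^sub>R a) = c *\<^sub>R Phi a" for c a
    by (metis Phi_Phi_inv Phi_inv_Phi linear_scale[OF linear_Phi_inv])
qed

lemmas Phi_inv_simps =
  linear_add[OF linear_Phi_inv] linear_diff[OF linear_Phi_inv] linear_scale[OF linear_Phi_inv]
lemmas Phi_simps = linear_add[OF linear_Phi] linear_diff[OF linear_Phi] linear_scale[OF linear_Phi]

lemma inner_Phi_Phi_inv [simp]: "inner (Phi U) (Phi_inv V) = inner U V"
  by (metis Phi_inv_Phi Phi_inv_self_adjoint)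

lemma inner_Phi_inv_Phi [simp]: "inner (Phi_inv U) (Phi V) = inner U V"
  by (metis Phi_inv_Phi Phi_inv_self_adjoint)

lemma Phi_self_adjoint: "inner (Phi U) V = inner U (Phi V)"
  by (metis Phi_inv_Phi Phi_inv_self_adjoint)

abbreviation h :: "'a \<Rightarrow> 'a \<Rightarrow> real" where
  "h \<equiv> metric_of Phi"

lemma h_sym: "h U V = h V U"
  by (metis metric_of_def inner_Phi_Phi_inv Phi_Phi_inv inner_commute)

definition nabla :: "'a \<Rightarrow> 'a \<Rightarrow> 'a" where
  "nabla U V = (1/2) *\<^sub>R (br U V + Phi_inv (br U (Phi V) + br V (Phi U)))"

lemma nabla_torsion_free: "nabla U V - nabla V U = br U V"
proof -
  have "nabla U V - nabla V U = (1/2) *\<^sub>R (br U V - br V U)"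
    by (simp add: nabla_def algebra_simps)
  also have "\<dots> = br U V" using antisym[of V U] by simp
  finally show ?thesis .
qed

lemma nabla_metric: "h (nabla U V) W + h V (nabla U W) = 0"
proof -
  have "h (nabla U V) W + h V (nabla U W) =
      (1/2) * (inner (br U V) (Phi W) + inner V (br U (Phi W))
      + (inner (br U (Phi V)) W + inner (Phi V) (br U W))
      + (inner (br V (Phi U)) W + inner V (br W (Phi U))))"
    by (simp add: metric_of_def nabla_def Phi_simps Phi_self_adjoint inner_add_left inner_add_right
        algebra_simps)
  also have "\<dots> = 0"
    using inner_bracket_swap[of U V "Phi W"] inner_bracket_swap[of U "Phi V" W]
      ad_invariant[of V "Phi U" W] antisym[of W "Phi U"]
    by (simp add: inner_minus_right)
  finally show ?thesis .
qed

lemma LC_metric_of: "LC br h = nabla"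
  unfolding LC_def
proof (rule the_equality)
  show "(\<forall>U V. nabla U V - nabla V U = br U V) \<and>
      (\<forall>U V W. h (nabla U V) W + h V (nabla U W) = 0)"
    using nabla_torsion_free nabla_metric by blast
next
  fix nb
  assume nb: "(\<forall>U V. nb U V - nb V U = br U V) \<and> (\<forall>U V W. h (nb U V) W + h V (nb U W) = 0)"
  have h_diff: "h (U - V) W = h U W - h V W" for U V W
    by (simp add: metric_of_def Phi_simps inner_diff_left)
  show "nb = nabla"
  proof (intro ext)
    fix U V
    have "h (nb U V - nabla U V) W = 0" for W
    proof -
      have "2 * h (nb U V) W = h (br U V) W - h (br V W) U + h (br W U) V"
        by (rule koszul_formula) (use nb h_sym h_diff in auto)
      moreover have "2 * h (nabla U V) W = h (br U V) W - h (br V W) U + h (br W U) V"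
        by (rule koszul_formula) (use nabla_torsion_free nabla_metric h_sym h_diff in auto)
      ultimately show ?thesis by (simp add: h_diff)
    qed
    from this[of "Phi (nb U V - nabla U V)"] have "Phi (nb U V - nabla U V) = 0"
      by (simp add: metric_of_def)
    then show "nb U V = nabla U V"
      by (metis Phi_inv_Phi eq_iff_diff_eq_0 linear_0[OF linear_Phi_inv])
  qed
qed

lemma h_Phi_inv_left [simp]: "h (Phi_inv U) V = inner U V"
  by (simp add: metric_of_def)

lemma seck_nabla:
  "seck br h x y =
    - h (nabla y y) (nabla x x) + h (nabla x y) (nabla y x) + h y (nabla (br x y) x)"
proof -
  have h_diff: "h (U - V) W = h U W - h V W" for U V W
    by (simp add: metric_of_def Phi_simps inner_diff_left)
  have h_skew: "h (nabla U V) W = - h V (nabla U W)" for U V W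
    using nabla_metric[of U V W] by simp
  show ?thesis
    using h_skew[of x "nabla y y" x] h_skew[of y "nabla x y" x] h_skew[of "br x y" y x]
    by (simp add: seck_def curvR_def LC_metric_of h_diff)
qed

lemma seck_Phi_inv:
  "seck br h (Phi_inv X) (Phi_inv Y) =
     - inner (br (Phi_inv Y) Y) (Phi_inv (br (Phi_inv X) X))
     + 1/4 * inner (br (Phi_inv X) Y + br (Phi_inv Y) X)
                   (Phi_inv (br (Phi_inv X) Y + br (Phi_inv Y) X))
     + 1/2 * inner (br (Phi_inv X) (Phi_inv Y)) (br (Phi_inv X) Y - br (Phi_inv Y) X)
     - 3/4 * h (br (Phi_inv X) (Phi_inv Y)) (br (Phi_inv X) (Phi_inv Y))"
proof -
  define x y where "x = Phi_inv X" and "y = Phi_inv Y"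
  define w S where "w = br x y" and "S = br x Y + br y X"
  have nabla_self: "nabla (Phi_inv Z) (Phi_inv Z) = Phi_inv (br (Phi_inv Z) Z)" for Z
    by (simp add: nabla_def Phi_inv_simps flip: scaleR_2)
  have Phi_xy: "Phi x = X" "Phi y = Y" by (simp_all add: x_def y_def)
  have "br y x = - w" unfolding w_def by (rule antisym)
  then have "h (nabla x y) (nabla y x) =
      h ((1/2) *\<^sub>R (w + Phi_inv S)) ((1/2) *\<^sub>R (- w + Phi_inv S))"
    by (simp add: nabla_def w_def S_def Phi_xy add.commute)
  also have "\<dots> = 1/4 * inner (Phi w + S) (Phi_inv S - w)"
    by (simp add: metric_of_def Phi_simps algebra_simps)
  also have "\<dots> = 1/4 * inner S (Phi_inv S) - 1/4 * h w w"
    by (simp add: metric_of_def inner_add_left inner_diff_right inner_commute[of S w]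
        algebra_simps)
  finally have mixed: "h (nabla x y) (nabla y x) = 1/4 * inner S (Phi_inv S) - 1/4 * h w w" .
  have "h y (nabla w x) = 1/2 * (inner Y (br w x) + inner y (br w X) + inner y (br x (Phi w)))"
    by (simp add: metric_of_def nabla_def x_def y_def inner_add_right flip: Phi_inv_self_adjoint)
  also have "\<dots> = 1/2 * inner w (br x Y - br y X) - 1/2 * h w w"
    using ad_invariant[of w x Y] ad_invariant[of w X y] ad_invariant[of y x "Phi w"]
      antisym[of X y] antisym[of y x]
    by (simp add: metric_of_def w_def inner_diff_right inner_commute algebra_simps)
  finally have bracket_term: "h y (nabla w x) = 1/2 * inner w (br x Y - br y X) - 1/2 * h w w" .
  show ?thesis
    using seck_nabla[of x y] mixed bracket_term
    by (simp add: nabla_self x_def y_def w_def S_def)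
qed

end

section \<open>Curvature along an inverse-linear path\<close>

definition curvature_coeff ::
  "('a::real_inner \<Rightarrow> 'a \<Rightarrow> 'a) \<Rightarrow> ('a \<Rightarrow> 'a) \<Rightarrow> 'a \<Rightarrow> 'a \<Rightarrow> nat \<Rightarrow> real" where
  "curvature_coeff br Psi X Y n =
    (if n = 0 then 1/4 * (norm (br X Y))\<^sup>2
     else if n = 1 then - 3/4 * inner (Psi (br X Y)) (br X Y)
     else if n = 2 then - 3/4 * (norm (Psi (br X Y)))\<^sup>2
       + 3/2 * inner (Psi (br X Y)) (vA br Psi X Y) - 1/2 * inner (br X Y) (vB br Psi X Y)
       - 1/4 * (norm (vA br Psi X Y))\<^sup>2 + 1/4 * (norm (vC br Psi X Y))\<^sup>2 - inner (br (Psi X) X) (br (Psi Y) Y)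
     else if n = 3 then - 3/4 * inner (Psi (Psi (Psi (br X Y)))) (br X Y)
       + 3/2 * inner (Psi (Psi (br X Y))) (vA br Psi X Y)
       - 3/2 * inner (Psi (br X Y)) (vB br Psi X Y)
       - 3/4 * inner (Psi (vA br Psi X Y)) (vA br Psi X Y)
       - 1/4 * inner (Psi (vC br Psi X Y)) (vC br Psi X Y)
       + inner (Psi (br (Psi X) X)) (br (Psi Y) Y) + inner (vA br Psi X Y) (vB br Psi X Y)
     else - 3/4 * inner ((Psi ^^ (n - 4)) (vD br Psi X Y)) (vD br Psi X Y))"

locale inverse_linear_metric = ad_invariant_bracket br
  for br :: "'a::real_inner \<Rightarrow> 'a \<Rightarrow> 'a" +
  fixes Psi Phi :: "'a \<Rightarrow> 'a" and t :: real
  assumes linear_Psi: "linear Psi"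
    and Psi_self_adjoint: "\<And>U V. inner (Psi U) V = inner U (Psi V)"
    and Phi_left_inverse: "\<And>Z. Phi (Z - t *\<^sub>R Psi Z) = Z"
    and Phi_right_inverse: "\<And>Z. Phi Z - t *\<^sub>R Psi (Phi Z) = Z"
begin

definition Phi_inv :: "'a \<Rightarrow> 'a" where
  "Phi_inv Z = Z - t *\<^sub>R Psi Z"

lemmas Psi_simps = linear_add[OF linear_Psi] linear_diff[OF linear_Psi] linear_scale[OF linear_Psi]
  linear_neg[OF linear_Psi]

sublocale left_invariant_metric br Phi Phi_inv
proof unfold_locales
  show "Phi_inv (U + V) = Phi_inv U + Phi_inv V" and "Phi_inv (c *\<^sub>R U) = c *\<^sub>R Phi_inv U"
    for U V c
    by (simp_all add: Phi_inv_def Psi_simps algebra_simps)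
  show "inner (Phi_inv U) V = inner U (Phi_inv V)" for U V
    by (simp add: Phi_inv_def inner_diff_left inner_diff_right Psi_self_adjoint)
qed (simp_all add: Phi_inv_def Phi_left_inverse Phi_right_inverse)

lemma bracket_Phi_inv_self: "br (Phi_inv X) X = - t *\<^sub>R br (Psi X) X"
  by (simp add: Phi_inv_def bracket_simps)

lemma bracket_Phi_inv_Phi_inv:
  "br (Phi_inv X) (Phi_inv Y) = br X Y - t *\<^sub>R vA br Psi X Y + t\<^sup>2 *\<^sub>R vB br Psi X Y"
  by (simp add: Phi_inv_def vA_def vB_def bracket_simps algebra_simps power2_eq_square)

lemma bracket_Phi_inv_add: "br (Phi_inv X) Y + br (Phi_inv Y) X = - t *\<^sub>R vC br Psi X Y"
  using antisym[of Y X] by (simp add: Phi_inv_def vC_def bracket_simps algebra_simps)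

lemma bracket_Phi_inv_diff:
  "br (Phi_inv X) Y - br (Phi_inv Y) X = 2 *\<^sub>R br X Y - t *\<^sub>R vA br Psi X Y"
  using antisym[of Y X] antisym[of "Psi Y" X]
  by (simp add: Phi_inv_def vA_def bracket_simps algebra_simps scaleR_2)

lemma bracket_Phi_inv_eq_Phi_inv_add_vD:
  "br (Phi_inv X) (Phi_inv Y) =
    Phi_inv (br X Y + t *\<^sub>R (Psi (br X Y) - vA br Psi X Y)) + t\<^sup>2 *\<^sub>R vD br Psi X Y"
  unfolding bracket_Phi_inv_Phi_inv
  by (simp add: vD_def Phi_inv_def Psi_simps algebra_simps power2_eq_square)

lemma inner_Phi_inv_expansion:
  fixes w A B :: 'a
  defines "E \<equiv> Psi w - A"
  shows "inner (w + t *\<^sub>R E) (Phi_inv (w + t *\<^sub>R E))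
      + 2 * t\<^sup>2 * inner (w + t *\<^sub>R E) (Psi E + B) =
      inner w w + t * (inner (Psi w) w - 2 * inner w A)
    + t\<^sup>2 * (inner A A + inner (Psi w) (Psi w) - 2 * inner (Psi w) A + 2 * inner w B)
    + t ^ 3 * (inner (Psi (Psi (Psi w))) w - 2 * inner (Psi (Psi w)) A + inner (Psi A) A
               + 2 * inner (Psi w) B - 2 * inner A B)"
proof -
  have "inner (w + t *\<^sub>R E) (Phi_inv (w + t *\<^sub>R E))
      + 2 * t\<^sup>2 * inner (w + t *\<^sub>R E) (Psi E + B)
      = inner w w + t * (2 * inner w E - inner w (Psi w))
      + t\<^sup>2 * (inner E E - 2 * inner E (Psi w) + 2 * inner w (Psi E + B))
      + t ^ 3 * (2 * inner E (Psi E + B) - inner E (Psi E))"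
    using Psi_self_adjoint[of w E] inner_commute[of "Psi w" E]
    by (simp add: Phi_inv_def Psi_simps inner_add_left inner_add_right inner_diff_right
        inner_commute[of E w] power2_eq_square power3_eq_cube algebra_simps)
  also have "inner w E = inner (Psi w) w - inner w A"
    by (simp add: E_def inner_diff_right inner_commute)
  also have "inner w (Psi w) = inner (Psi w) w"
    by (rule inner_commute)
  also have "inner E E = inner A A + inner (Psi w) (Psi w) - 2 * inner (Psi w) A"
    by (simp add: E_def inner_diff_left inner_diff_right inner_commute[of A "Psi w"])
  also have "inner E (Psi w) = inner (Psi w) (Psi w) - inner (Psi w) A"
    by (simp add: E_def inner_diff_left inner_commute[of A "Psi w"])
  also have "inner w (Psi E + B) = inner (Psi w) (Psi w) - inner (Psi w) A + inner w B"
    using Psi_self_adjoint[of w "Psi w"] Psi_self_adjoint[of w A]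
    by (simp add: E_def Psi_simps inner_diff_right inner_add_right)
  also have "inner E (Psi E + B) = inner E (Psi E) + inner (Psi w) B - inner A B"
    by (simp add: E_def inner_add_right inner_diff_left)
  also have "inner E (Psi E)
      = inner (Psi (Psi (Psi w))) w - 2 * inner (Psi (Psi w)) A + inner (Psi A) A"
    using Psi_self_adjoint[of "Psi w" "Psi w"] Psi_self_adjoint[of "Psi (Psi w)" w]
      Psi_self_adjoint[of "Psi w" A] Psi_self_adjoint[of A "Psi w"]
    by (simp add: E_def Psi_simps inner_diff_left inner_diff_right inner_commute)
  finally show ?thesis
    by (simp add: algebra_simps)
qed

lemma h_bracket_Phi_inv:
  fixes X Y :: 'a
  defines "w \<equiv> br X Y" and "A \<equiv> vA br Psi X Y" and "B \<equiv> vB br Psi X Y"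
    and "D \<equiv> vD br Psi X Y"
  shows "h (br (Phi_inv X) (Phi_inv Y)) (br (Phi_inv X) (Phi_inv Y)) =
      inner w w + t * (inner (Psi w) w - 2 * inner w A)
    + t\<^sup>2 * (inner A A + inner (Psi w) (Psi w) - 2 * inner (Psi w) A + 2 * inner w B)
    + t ^ 3 * (inner (Psi (Psi (Psi w))) w - 2 * inner (Psi (Psi w)) A + inner (Psi A) A
               + 2 * inner (Psi w) B - 2 * inner A B)
    + t ^ 4 * inner (Phi D) D"
proof -
  define q where "q = w + t *\<^sub>R (Psi w - A)"
  have D_eq: "D = Psi (Psi w - A) + B"
    by (simp add: D_def vD_def w_def A_def B_def Psi_simps)
  have "h (br (Phi_inv X) (Phi_inv Y)) (br (Phi_inv X) (Phi_inv Y))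
      = inner (q + t\<^sup>2 *\<^sub>R Phi D) (Phi_inv q + t\<^sup>2 *\<^sub>R D)"
    by (simp add: bracket_Phi_inv_eq_Phi_inv_add_vD metric_of_def Phi_simps
        q_def w_def A_def D_def)
  also have "\<dots> = inner q (Phi_inv q) + 2 * t\<^sup>2 * inner q D + t ^ 4 * inner (Phi D) D"
    by (simp add: inner_add_left inner_add_right inner_commute[of D q] power4_eq_xxxx
        power2_eq_square algebra_simps)
  also have "inner q (Phi_inv q) + 2 * t\<^sup>2 * inner q D =
      inner w w + t * (inner (Psi w) w - 2 * inner w A)
    + t\<^sup>2 * (inner A A + inner (Psi w) (Psi w) - 2 * inner (Psi w) A + 2 * inner w B)
    + t ^ 3 * (inner (Psi (Psi (Psi w))) w - 2 * inner (Psi (Psi w)) A + inner (Psi A) A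
               + 2 * inner (Psi w) B - 2 * inner A B)"
    unfolding q_def D_eq by (rule inner_Phi_inv_expansion)
  finally show ?thesis .
qed

lemma seck_inverse_linear:
  "seck br h (Phi_inv X) (Phi_inv Y) = (\<Sum>k<4. curvature_coeff br Psi X Y k * t ^ k)
     - 3/4 * t ^ 4 * inner (Phi (vD br Psi X Y)) (vD br Psi X Y)"
proof -
  define w A B C where "w = br X Y" and "A = vA br Psi X Y" and "B = vB br Psi X Y"
    and "C = vC br Psi X Y"
  have curvature_term: "inner (br (Phi_inv Y) Y) (Phi_inv (br (Phi_inv X) X))
      = t\<^sup>2 * inner (br (Psi X) X) (br (Psi Y) Y)
        - t ^ 3 * inner (Psi (br (Psi X) X)) (br (Psi Y) Y)"
    unfolding bracket_Phi_inv_self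
    by (simp add: Phi_inv_def Psi_simps inner_diff_right inner_commute power2_eq_square
        power3_eq_cube algebra_simps)
  have symmetric_term: "inner (br (Phi_inv X) Y + br (Phi_inv Y) X)
        (Phi_inv (br (Phi_inv X) Y + br (Phi_inv Y) X))
      = t\<^sup>2 * (inner C C - t * inner (Psi C) C)"
    unfolding bracket_Phi_inv_add
    by (simp add: Phi_inv_def Psi_simps inner_diff_right inner_commute C_def power2_eq_square
        algebra_simps)
  have skew_term: "inner (br (Phi_inv X) (Phi_inv Y)) (br (Phi_inv X) Y - br (Phi_inv Y) X)
      = 2 * inner w w - 3 * t * inner w A + t\<^sup>2 * (inner A A + 2 * inner w B) - t ^ 3 * inner A B"
    unfolding bracket_Phi_inv_Phi_inv bracket_Phi_inv_diff
    by (simp add: w_def A_def B_def inner_add_left inner_diff_left inner_diff_right inner_commute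
        power2_eq_square power3_eq_cube algebra_simps)
  show ?thesis
    unfolding seck_Phi_inv curvature_term symmetric_term skew_term h_bracket_Phi_inv
      curvature_coeff_def power2_norm_eq_inner
    by (simp add: w_def A_def B_def C_def eval_nat_numeral algebra_simps)
qed

end

section \<open>Neumann series and Taylor expansion\<close>

lemma norm_funpow_le:
  fixes L :: "'a::real_normed_vector \<Rightarrow> 'a"
  assumes "bounded_linear L"
  shows "norm ((L ^^ n) v) \<le> onorm L ^ n * norm v"
proof (induction n)
  case (Suc n)
  have "norm ((L ^^ Suc n) v) \<le> onorm L * norm ((L ^^ n) v)"
    using onorm[OF assms] by simp
  also have "\<dots> \<le> onorm L * (onorm L ^ n * norm v)"
    by (rule mult_left_mono[OF Suc onorm_pos_le[OF assms]])
  finally show ?case by (simp add: mult.assoc)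
qed simp

lemma neumann_series:
  fixes L :: "'a::banach \<Rightarrow> 'a" and v :: 'a
  assumes L: "bounded_linear L" and small: "\<bar>t\<bar> * onorm L < 1"
  defines "N \<equiv> \<Sum>n. t ^ n *\<^sub>R (L ^^ n) v"
  shows "(\<lambda>n. t ^ n *\<^sub>R (L ^^ n) v) sums N" and "N - t *\<^sub>R L N = v"
proof -
  define g where "g n = t ^ n *\<^sub>R (L ^^ n) v" for n
  have "norm (g n) \<le> (\<bar>t\<bar> * onorm L) ^ n * norm v" for n
    using mult_left_mono[OF norm_funpow_le[OF L, of n v], of "\<bar>t\<bar> ^ n"]
    by (simp add: g_def power_abs power_mult_distrib mult.assoc)
  moreover have "summable (\<lambda>n. (\<bar>t\<bar> * onorm L) ^ n * norm v)"
    using small onorm_pos_le[OF L] by (intro summable_mult2 summable_geometric) simp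
  ultimately have "summable g"
    by (intro summable_comparison_test'[of "\<lambda>n. (\<bar>t\<bar> * onorm L) ^ n * norm v" 0 g])
  then show "g sums N"
    by (simp add: N_def g_def[abs_def] summable_sums)
  have "(\<lambda>n. g (Suc n)) sums (t *\<^sub>R L N)"
    using bounded_linear.sums[OF bounded_linear_compose[OF bounded_linear_scaleR_right L]
        \<open>g sums N\<close>]
    by (simp add: g_def linear_scale[OF bounded_linear.linear[OF L]])
  then have "g sums (t *\<^sub>R L N + g 0)"
    by (simp add: sums_Suc_iff)
  from sums_unique2[OF \<open>g sums N\<close> this] show "N - t *\<^sub>R L N = v"
    by (simp add: g_def diff_eq_eq add.commute)
qed

lemma inverse_linear_metric_inv:
  fixes br :: "'a::euclidean_space \<Rightarrow> 'a \<Rightarrow> 'a"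
  assumes "ad_invariant_bracket br" and Psi: "linear Psi"
    and "\<And>U V. inner (Psi U) V = inner U (Psi V)" and small: "\<bar>t\<bar> * onorm Psi < 1"
  shows "inverse_linear_metric br Psi (inv (\<lambda>Z. Z - t *\<^sub>R Psi Z)) t"
    and "inv (\<lambda>Z. Z - t *\<^sub>R Psi Z) v = (\<Sum>n. t ^ n *\<^sub>R (Psi ^^ n) v)"
proof -
  let ?P = "\<lambda>Z. Z - t *\<^sub>R Psi Z"
  have bounded: "bounded_linear Psi"
    using Psi linear_conv_bounded_linear by blast
  have P_neumann: "?P (\<Sum>n. t ^ n *\<^sub>R (Psi ^^ n) v) = v" for v
    by (rule neumann_series(2)[OF bounded small])
  have "linear ?P"
    by (rule linearI) (simp_all add: linear_add[OF Psi] linear_scale[OF Psi] algebra_simps)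
  moreover have "surj ?P"
    using P_neumann by (rule surjI)
  ultimately have "inj ?P"
    by (rule linear_surj_imp_inj)
  have left: "inv ?P (Z - t *\<^sub>R Psi Z) = Z" for Z
    by (rule inv_f_f[OF \<open>inj ?P\<close>])
  have right: "inv ?P Z - t *\<^sub>R Psi (inv ?P Z) = Z" for Z
    by (rule surj_f_inv_f[OF \<open>surj ?P\<close>])
  show "inverse_linear_metric br Psi (inv ?P) t"
    by (intro inverse_linear_metric.intro inverse_linear_metric_axioms.intro assms left right)
  show "inv ?P v = (\<Sum>n. t ^ n *\<^sub>R (Psi ^^ n) v)"
    using left[of "\<Sum>n. t ^ n *\<^sub>R (Psi ^^ n) v"] by (simp only: P_neumann)
qed

lemma seck_inverse_linear_series:
  fixes br :: "'a::euclidean_space \<Rightarrow> 'a \<Rightarrow> 'a" and X Y :: 'a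
  assumes "ad_invariant_bracket br" and "linear Psi"
    and "\<And>U V. inner (Psi U) V = inner U (Psi V)" and small: "\<bar>t\<bar> * onorm Psi < 1"
  defines "D \<equiv> vD br Psi X Y"
  shows "summable (\<lambda>n. t ^ (n + 4) * inner ((Psi ^^ n) D) D)"
    and "seck br (metric_of (inv (\<lambda>Z. Z - t *\<^sub>R Psi Z))) (X - t *\<^sub>R Psi X) (Y - t *\<^sub>R Psi Y) =
      (\<Sum>k<4. curvature_coeff br Psi X Y k * t ^ k) - 3/4 * (\<Sum>n. t ^ (n + 4) * inner ((Psi ^^ n) D) D)"
proof -
  define Phi where "Phi = inv (\<lambda>Z. Z - t *\<^sub>R Psi Z)"
  interpret inverse_linear_metric br Psi Phi t
    unfolding Phi_def by (rule inverse_linear_metric_inv(1)[OF assms(1-4)])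
  have bounded: "bounded_linear Psi"
    using \<open>linear Psi\<close> linear_conv_bounded_linear by blast
  have "(\<lambda>n. t ^ n *\<^sub>R (Psi ^^ n) D) sums Phi D"
    unfolding Phi_def inverse_linear_metric_inv(2)[OF assms(1-4)]
    by (rule neumann_series(1)[OF bounded small])
  from bounded_linear.sums[OF bounded_linear_inner_left this]
  have "(\<lambda>n. t ^ n * inner ((Psi ^^ n) D) D) sums inner (Phi D) D"
    by simp
  from sums_mult[OF this, of "t ^ 4"]
  have series: "(\<lambda>n. t ^ (n + 4) * inner ((Psi ^^ n) D) D) sums (t ^ 4 * inner (Phi D) D)"
    by (simp add: power_add algebra_simps)
  then show "summable (\<lambda>n. t ^ (n + 4) * inner ((Psi ^^ n) D) D)"
    by (rule sums_summable)
  show "seck br (metric_of Phi) (X - t *\<^sub>R Psi X) (Y - t *\<^sub>R Psi Y) =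
      (\<Sum>k<4. curvature_coeff br Psi X Y k * t ^ k) - 3/4 * (\<Sum>n. t ^ (n + 4) * inner ((Psi ^^ n) D) D)"
    using seck_inverse_linear[of X Y] sums_unique[OF series] by (simp add: Phi_inv_def D_def)
qed

lemma curvature_coeff_sums:
  fixes br :: "'a::euclidean_space \<Rightarrow> 'a \<Rightarrow> 'a"
  assumes "ad_invariant_bracket br" and "linear Psi"
    and "\<And>U V. inner (Psi U) V = inner U (Psi V)" and "\<bar>t\<bar> * onorm Psi < 1"
  shows "(\<lambda>n. curvature_coeff br Psi X Y n * t ^ n) sums
    seck br (metric_of (inv (\<lambda>Z. Z - t *\<^sub>R Psi Z))) (X - t *\<^sub>R Psi X) (Y - t *\<^sub>R Psi Y)"
proof -
  let ?d = "\<lambda>n. inner ((Psi ^^ n) (vD br Psi X Y)) (vD br Psi X Y)"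
  have "(\<lambda>n. - 3/4 * (t ^ (n + 4) * ?d n)) sums (- 3/4 * (\<Sum>n. t ^ (n + 4) * ?d n))"
    by (intro sums_mult summable_sums seck_inverse_linear_series(1)[OF assms])
  then have "(\<lambda>n. curvature_coeff br Psi X Y (n + 4) * t ^ (n + 4)) sums
      (- 3/4 * (\<Sum>n. t ^ (n + 4) * ?d n))"
    by (simp add: curvature_coeff_def algebra_simps)
  then show ?thesis
    using sums_iff_shift[where f = "\<lambda>n. curvature_coeff br Psi X Y n * t ^ n" and n = 4]
    unfolding seck_inverse_linear_series(2)[OF assms] by (simp add: algebra_simps)
qed

lemma fps_conv_radius_le_funpow_deriv:
  "fps_conv_radius (G :: real fps) \<le> fps_conv_radius ((fps_deriv ^^ n) G)"
  by (induction n) (auto intro: order_trans fps_conv_radius_deriv)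

lemma higher_deriv_eval_fps:
  fixes G :: "real fps"
  assumes "norm z < fps_conv_radius G"
  shows "(deriv ^^ n) (eval_fps G) z = eval_fps ((fps_deriv ^^ n) G) z"
  using assms
proof (induction n arbitrary: z)
  case (Suc n)
  have "eventually (\<lambda>s. s \<in> eball 0 (fps_conv_radius G)) (nhds z)"
    using Suc.prems by (intro eventually_nhds_in_open) auto
  then have "eventually (\<lambda>s. (deriv ^^ n) (eval_fps G) s = eval_fps ((fps_deriv ^^ n) G) s) (nhds z)"
    by eventually_elim (use Suc.IH in auto)
  then have "(deriv ^^ Suc n) (eval_fps G) z = deriv (eval_fps ((fps_deriv ^^ n) G)) z"
    by (simp add: deriv_cong_ev)
  also have "\<dots> = eval_fps ((fps_deriv ^^ Suc n) G) z"
    using Suc.prems fps_conv_radius_le_funpow_deriv[of G n]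
    by (simp add: eval_fps_deriv less_le_trans)
  finally show ?case .
qed simp

lemma power_series_higher_deriv:
  fixes c :: "nat \<Rightarrow> real" and f :: "real \<Rightarrow> real" and R :: ereal
  assumes sums: "\<And>t. ereal \<bar>t\<bar> < R \<Longrightarrow> (\<lambda>n. c n * t ^ n) sums f t"
  shows "ereal \<bar>t\<bar> < R \<Longrightarrow> (deriv ^^ n) f differentiable (at t)"
    and "0 < R \<Longrightarrow> (deriv ^^ n) f 0 = fact n * c n"
proof -
  define F where "F = Abs_fps c"
  have R_le: "R \<le> fps_conv_radius F"
    unfolding F_def fps_conv_radius_def
    by (intro conv_radius_geI_ex') (auto intro!: sums_summable[OF sums])
  have eval_F: "eval_fps F s = f s" if "s \<in> eball 0 R" for s
    using sums_unique[OF sums] that by (simp add: F_def eval_fps_def)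
  have deriv_f: "(deriv ^^ n) f s = eval_fps ((fps_deriv ^^ n) F) s" if "ereal \<bar>s\<bar> < R" for n s
  proof -
    have "eventually (\<lambda>s. eval_fps F s = f s) (nhds s)"
      using that eval_F
    by (intro eventually_nhds_in_open[THEN eventually_mono, of "eball 0 R"]) auto
    then have "(deriv ^^ n) f s = (deriv ^^ n) (eval_fps F) s"
      by (intro higher_deriv_cong_ev) (simp_all add: eq_commute)
    also have "\<dots> = eval_fps ((fps_deriv ^^ n) F) s"
      using that R_le by (intro higher_deriv_eval_fps) auto
    finally show ?thesis .
  qed
  show "(deriv ^^ n) f differentiable (at t)" if "ereal \<bar>t\<bar> < R"
  proof -
    have "ereal (norm t) < fps_conv_radius ((fps_deriv ^^ n) F)"
      using that R_le fps_conv_radius_le_funpow_deriv[of F n] by auto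
    then have "(eval_fps ((fps_deriv ^^ n) F) has_field_derivative
        eval_fps (fps_deriv ((fps_deriv ^^ n) F)) t) (at t)"
      by (rule has_field_derivative_eval_fps)
    then have "((deriv ^^ n) f has_field_derivative
        eval_fps (fps_deriv ((fps_deriv ^^ n) F)) t) (at t)"
      by (rule has_field_derivative_transform_within_open[OF _ open_eball[of 0 R]])
        (use that in \<open>auto simp: deriv_f\<close>)
    then show ?thesis
      unfolding real_differentiable_def by blast
  qed
  show "(deriv ^^ n) f 0 = fact n * c n" if "0 < R"
    using that deriv_f[of 0 n]
    by (simp add: eval_fps_at_0 fps_0th_higher_deriv F_def zero_ereal_def)
qed

lemma ereal_abs_less_inverse_iff:
  fixes a t :: real
  assumes "0 \<le> a"
  shows "ereal \<bar>t\<bar> < inverse (ereal a) \<longleftrightarrow> \<bar>t\<bar> * a < 1"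
  using assms by (cases "a = 0") (auto simp: pos_less_divide_eq field_simps)

theorem mainTheorem3:
  fixes br :: "'a::euclidean_space \<Rightarrow> 'a \<Rightarrow> 'a"
    and Psi :: "'a \<Rightarrow> 'a"
    and X Y :: 'a
  assumes bil: "bilinear br"
    and antisym: "\<And>U V. br U V = - br V U"
    and jacobi: "\<And>U V W. br U (br V W) + br V (br W U) + br W (br U V) = 0"
    and adinv: "\<And>U V W. inner (br U V) W = inner U (br V W)"
    and linPsi: "linear Psi"
    and selfadj: "\<And>U V. inner (Psi U) V = inner U (Psi V)"
  defines "\<kappa> \<equiv> (\<lambda>t::real. seck br (metric_of (inv (\<lambda>Z. Z - t *\<^sub>R Psi Z)))
                          (X - t *\<^sub>R Psi X) (Y - t *\<^sub>R Psi Y))"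
    and "\<alpha> \<equiv> 1/4 * (norm (br X Y))\<^sup>2"
    and "\<beta> \<equiv> - 3/4 * inner (Psi (br X Y)) (br X Y)"
    and "\<gamma> \<equiv> - 3/4 * (norm (Psi (br X Y)))\<^sup>2 + 3/2 * inner (Psi (br X Y)) (vA br Psi X Y)
              - 1/2 * inner (br X Y) (vB br Psi X Y) - 1/4 * (norm (vA br Psi X Y))\<^sup>2 + 1/4 * (norm (vC br Psi X Y))\<^sup>2
              - inner (br (Psi X) X) (br (Psi Y) Y)"
    and "\<delta> \<equiv> - 3/4 * inner (Psi (Psi (Psi (br X Y)))) (br X Y)
              + 3/2 * inner (Psi (Psi (br X Y))) (vA br Psi X Y) - 3/2 * inner (Psi (br X Y)) (vB br Psi X Y)
              - 3/4 * inner (Psi (vA br Psi X Y)) (vA br Psi X Y) - 1/4 * inner (Psi (vC br Psi X Y)) (vC br Psi X Y)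
              + inner (Psi (br (Psi X) X)) (br (Psi Y) Y) + inner (vA br Psi X Y) (vB br Psi X Y)"
  shows "(\<forall>t. \<bar>t\<bar> * onorm Psi < 1 \<longrightarrow>
            summable (\<lambda>n. t ^ (n + 4) * inner ((Psi ^^ n) (vD br Psi X Y)) (vD br Psi X Y)) \<and>
            \<kappa> t = \<alpha> + \<beta> * t + \<gamma> * t\<^sup>2 + \<delta> * t ^ 3
                  - 3/4 * (\<Sum>n. t ^ (n + 4) * inner ((Psi ^^ n) (vD br Psi X Y)) (vD br Psi X Y)))
       \<and> (\<forall>n t. \<bar>t\<bar> * onorm Psi < 1 \<longrightarrow> (deriv ^^ n) \<kappa> differentiable (at t))
       \<and> (deriv ^^ 0) \<kappa> 0 = fact 0 * \<alpha>
       \<and> (deriv ^^ 1) \<kappa> 0 = fact 1 * \<beta>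
       \<and> (deriv ^^ 2) \<kappa> 0 = fact 2 * \<gamma>
       \<and> (deriv ^^ 3) \<kappa> 0 = fact 3 * \<delta>
       \<and> (\<forall>n\<ge>4. (deriv ^^ n) \<kappa> 0
              = fact n * (- 3/4 * inner ((Psi ^^ (n - 4)) (vD br Psi X Y)) (vD br Psi X Y)))"
proof -
  define c where "c = curvature_coeff br Psi X Y"
  define R where "R = inverse (ereal (onorm Psi))"
  have in_radius: "ereal \<bar>t\<bar> < R \<longleftrightarrow> \<bar>t\<bar> * onorm Psi < 1" for t
    unfolding R_def using linPsi
    by (intro ereal_abs_less_inverse_iff onorm_pos_le) (simp add: linear_conv_bounded_linear)
  have bracket: "ad_invariant_bracket br"
    using bil antisym adinv by unfold_locales
  have sums: "(\<lambda>n. c n * t ^ n) sums \<kappa> t" if "ereal \<bar>t\<bar> < R" for t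
    unfolding c_def \<kappa>_def using bracket linPsi selfadj that[unfolded in_radius]
    by (rule curvature_coeff_sums)
  have "0 < R"
    using in_radius[of 0] by (simp add: zero_ereal_def)
  then have taylor: "(deriv ^^ n) \<kappa> 0 = fact n * c n" for n
    using sums by (rule power_series_higher_deriv(2)[rotated])
  have cubic: "(\<Sum>k<4. c k * t ^ k) = \<alpha> + \<beta> * t + \<gamma> * t\<^sup>2 + \<delta> * t ^ 3" for t
    by (simp add: c_def curvature_coeff_def \<alpha>_def \<beta>_def \<gamma>_def \<delta>_def eval_nat_numeral)
  show ?thesis
  proof (intro conjI allI impI)
    fix t assume "\<bar>t\<bar> * onorm Psi < 1"
    from seck_inverse_linear_series[OF bracket linPsi selfadj this, of X Y]
    show "summable (\<lambda>n. t ^ (n + 4) * inner ((Psi ^^ n) (vD br Psi X Y)) (vD br Psi X Y))"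
      and "\<kappa> t = \<alpha> + \<beta> * t + \<gamma> * t\<^sup>2 + \<delta> * t ^ 3
                  - 3/4 * (\<Sum>n. t ^ (n + 4) * inner ((Psi ^^ n) (vD br Psi X Y)) (vD br Psi X Y))"
      unfolding \<kappa>_def cubic[unfolded c_def] by simp_all
  next
    fix n and t :: real assume "\<bar>t\<bar> * onorm Psi < 1"
    then show "(deriv ^^ n) \<kappa> differentiable (at t)"
      by (intro power_series_higher_deriv(1)[of R c, OF sums]) (simp_all add: in_radius)
  qed (simp_all only: taylor,
       simp_all add: c_def curvature_coeff_def \<alpha>_def \<beta>_def \<gamma>_def \<delta>_def)
qed

end
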